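(* Let $K=3$. For generic $H\in\mathbb{C}^{3\times 3}$ (that is, for all $H$ outside the zero set of some nonzero polynomial in the entries of $H$), there exist diagonal matrices $D_1,D_2,D_3\in\mathbb{C}^{3\times 3}$ such that, with $B := HD_2 + HD_3H^TD_1H$, the following hold for each $i\in\{1,2,3\}$: (i) $\dfrac{B_{ij}}{H_{ij}} = \dfrac{B_{ij'}}{H_{ij'}}$ for all $j,j'\neq i$; (ii) $\dfrac{B_{ii}}{H_{ii}} \neq \dfrac{B_{ij}}{H_{ij}}$ for all $j\neq i$.
   Context: Setting: a 3-user interference channel with forward channel matrix $H$ ($H_{ij}$ is the gain from source $s_j$ to destination $t_i$) and reciprocal feedback channel $G=H^T$, using a three-phase scheme: destinations receive $y=Hx$ in phase 1, sources receive $H^TD_1y$ in phase 2, and destinations receive $Bx$ in phase 3 (noise ignored), with diagonal coding matrices $D_1,D_2,D_3$. Condition (i) (interference alignment) and (ii) (desired signal preserved) allow each destination to cancel all interference by a linear combination of its phase-1 and phase-3 observations. *)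

theory Defs
  imports "HOL-Analysis.Analysis" "HOL-Library.Numeral_Type"
begin

definition is_diag_mat :: "'a::zero^'n^'n \<Rightarrow> bool" where
  "is_diag_mat D \<longleftrightarrow> (\<forall>i j. i \<noteq> j \<longrightarrow> D$i$j = 0)"

text \<open>Polynomials in the entries of an n x n complex matrix: a finitely supported
  coefficient function on exponent vectors (one exponent per entry).\<close>
definition is_mpoly :: "(('n \<times> 'n \<Rightarrow> nat) \<Rightarrow> complex) \<Rightarrow> bool" where
  "is_mpoly c \<longleftrightarrow> finite {e. c e \<noteq> 0}"

definition mpoly_nonzero :: "(('n \<times> 'n \<Rightarrow> nat) \<Rightarrow> complex) \<Rightarrow> bool" where
  "mpoly_nonzero c \<longleftrightarrow> (\<exists>e. c e \<noteq> 0)"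

definition mpoly_eval :: "(('n::finite \<times> 'n \<Rightarrow> nat) \<Rightarrow> complex) \<Rightarrow> complex^'n^'n \<Rightarrow> complex" where
  "mpoly_eval c H = (\<Sum>e\<in>{e. c e \<noteq> 0}. c e * (\<Prod>p\<in>UNIV. (H $ fst p $ snd p) ^ e p))"

end

theory Submission
  imports Defs
begin

text \<open>Take \<open>D\<^sub>1 = diag(1,0,0)\<close>. Then \<open>H\<^sup>T D\<^sub>1 H\<close> is the rank-one matrix built from the first
  row \<open>h\<close> of \<open>H\<close>, so \<open>B\<^sub>i\<^sub>j = H\<^sub>i\<^sub>j d\<^sub>j + s\<^sub>i h\<^sub>j\<close> with \<open>d = diag D\<^sub>2\<close> and \<open>s = H D\<^sub>3 h\<^sup>T\<close>; as \<open>D\<^sub>3\<close>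
  ranges over diagonal matrices, \<open>s\<close> ranges over all vectors once \<open>H\<close> is invertible and \<open>h\<close> has
  no zero entry. The ratios \<open>B\<^sub>i\<^sub>j / H\<^sub>i\<^sub>j = d\<^sub>j + s\<^sub>i h\<^sub>j / H\<^sub>i\<^sub>j\<close> then give, row by row, a few
  linear conditions on \<open>d\<close> and \<open>s\<close>, solvable as soon as four \<open>2\<times>2\<close> minors of \<open>H\<close> are nonzero.
  Genericity is witnessed by the product of all entries, the determinant and these minors.\<close>

definition mpoly_function :: "(complex^'n::finite^'n \<Rightarrow> complex) \<Rightarrow> bool" where
  "mpoly_function f \<longleftrightarrow> (\<exists>c. is_mpoly c \<and> (\<forall>H. mpoly_eval c H = f H))"

definition mpoly_monom :: "('n::finite \<times> 'n \<Rightarrow> nat) \<Rightarrow> complex^'n^'n \<Rightarrow> complex" where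
  "mpoly_monom e H = (\<Prod>p\<in>UNIV. (H $ fst p $ snd p) ^ e p)"

lemma mpoly_monom_add: "mpoly_monom (\<lambda>q. e1 q + e2 q) H = mpoly_monom e1 H * mpoly_monom e2 H"
  unfolding mpoly_monom_def by (simp add: power_add prod.distrib)

lemma mpoly_eval_superset:
  assumes "finite S" "{e. c e \<noteq> 0} \<subseteq> S"
  shows "mpoly_eval c H = (\<Sum>e\<in>S. c e * mpoly_monom e H)"
  unfolding mpoly_eval_def mpoly_monom_def
  by (rule sum.mono_neutral_left[OF assms]) auto

lemma mpoly_nonzero_if_eval_nonzero: "mpoly_eval c H \<noteq> 0 \<Longrightarrow> mpoly_nonzero c"
  unfolding mpoly_nonzero_def mpoly_eval_def by (metis (mono_tags) empty_Collect_eq sum.empty)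

lemma mpoly_function_scaled_monom: "mpoly_function (\<lambda>H. a * mpoly_monom e0 H)"
proof -
  define c where "c = (\<lambda>e. if e = e0 then a else 0)"
  have supp: "{e. c e \<noteq> 0} \<subseteq> {e0}" unfolding c_def by auto
  have "mpoly_eval c H = a * mpoly_monom e0 H" for H
    using mpoly_eval_superset[OF _ supp, of H] by (simp add: c_def)
  moreover have "is_mpoly c"
    unfolding is_mpoly_def using supp finite_subset by blast
  ultimately show ?thesis unfolding mpoly_function_def by blast
qed

lemma mpoly_function_const: "mpoly_function (\<lambda>H. a)"
  using mpoly_function_scaled_monom[of a "\<lambda>_. 0"] by (simp add: mpoly_monom_def)

lemma mpoly_function_entry: "mpoly_function (\<lambda>H. H$i$j)"
proof -
  have "mpoly_monom (\<lambda>p. if p = (i, j) then 1 else 0) H = H$i$j" for H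
  proof -
    have "mpoly_monom (\<lambda>p. if p = (i, j) then 1 else 0) H
        = (\<Prod>p\<in>UNIV. if p = (i, j) then H $ fst p $ snd p else 1)"
      unfolding mpoly_monom_def by (rule prod.cong) auto
    then show ?thesis by (simp add: prod.delta)
  qed
  then show ?thesis
    using mpoly_function_scaled_monom[of 1 "\<lambda>p. if p = (i, j) then 1 else 0"] by simp
qed

lemma mpoly_function_add:
  assumes "mpoly_function f" "mpoly_function g"
  shows "mpoly_function (\<lambda>H. f H + g H)"
proof -
  obtain c d where c: "is_mpoly c" "\<And>H. mpoly_eval c H = f H"
    and d: "is_mpoly d" "\<And>H. mpoly_eval d H = g H"
    using assms unfolding mpoly_function_def by blast
  define S where "S = {e. c e \<noteq> 0} \<union> {e. d e \<noteq> 0}"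
  have fin: "finite S" using c d unfolding is_mpoly_def S_def by auto
  have "mpoly_eval (\<lambda>e. c e + d e) H = f H + g H" for H
  proof -
    have "mpoly_eval (\<lambda>e. c e + d e) H = (\<Sum>e\<in>S. (c e + d e) * mpoly_monom e H)"
      by (rule mpoly_eval_superset[OF fin]) (auto simp: S_def)
    also have "\<dots> = mpoly_eval c H + mpoly_eval d H"
      using fin by (simp add: mpoly_eval_superset[of S] S_def distrib_right sum.distrib)
    finally show ?thesis using c d by simp
  qed
  moreover have "is_mpoly (\<lambda>e. c e + d e)"
    unfolding is_mpoly_def by (rule finite_subset[OF _ fin]) (auto simp: S_def)
  ultimately show ?thesis unfolding mpoly_function_def by blast
qed

lemma mpoly_function_mult:
  fixes f g :: "complex^'n::finite^'n \<Rightarrow> complex"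
  assumes "mpoly_function f" "mpoly_function g"
  shows "mpoly_function (\<lambda>H. f H * g H)"
proof -
  obtain c d where c: "is_mpoly c" "\<And>H. mpoly_eval c H = f H"
    and d: "is_mpoly d" "\<And>H. mpoly_eval d H = g H"
    using assms unfolding mpoly_function_def by blast
  define Sc where "Sc = {e. c e \<noteq> 0}"
  define Sd where "Sd = {e. d e \<noteq> 0}"
  have fc: "finite Sc" and fd: "finite Sd"
    using c d unfolding is_mpoly_def Sc_def Sd_def by auto
  define plus :: "('n \<times> 'n \<Rightarrow> nat) \<times> ('n \<times> 'n \<Rightarrow> nat) \<Rightarrow> 'n \<times> 'n \<Rightarrow> nat"
    where "plus = (\<lambda>(e1, e2) q. e1 q + e2 q)"
  define T where "T = plus ` (Sc \<times> Sd)"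
  have fT: "finite T" unfolding T_def using fc fd by auto
  define h where "h = (\<lambda>e. \<Sum>p\<in>{p\<in>Sc \<times> Sd. plus p = e}. c (fst p) * d (snd p))"
  have supp: "{e. h e \<noteq> 0} \<subseteq> T"
    unfolding h_def T_def by (force intro: sum.neutral)
  have "mpoly_eval h H = f H * g H" for H
  proof -
    have "mpoly_eval h H = (\<Sum>e\<in>T. h e * mpoly_monom e H)"
      by (rule mpoly_eval_superset[OF fT supp])
    also have "\<dots> = (\<Sum>e\<in>T. \<Sum>p\<in>{p\<in>Sc \<times> Sd. plus p = e}.
                       c (fst p) * d (snd p) * mpoly_monom (plus p) H)"
      unfolding h_def sum_distrib_right by (rule sum.cong) auto
    also have "\<dots> = (\<Sum>p\<in>Sc \<times> Sd. c (fst p) * d (snd p) * mpoly_monom (plus p) H)"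
      by (rule sum.group) (use fc fd in \<open>auto simp: T_def\<close>)
    also have "\<dots> = (\<Sum>e1\<in>Sc. \<Sum>e2\<in>Sd. (c e1 * mpoly_monom e1 H) * (d e2 * mpoly_monom e2 H))"
      unfolding sum.cartesian_product plus_def
      by (rule sum.cong) (auto simp: mpoly_monom_add mult_ac)
    also have "\<dots> = (\<Sum>e1\<in>Sc. c e1 * mpoly_monom e1 H) * (\<Sum>e2\<in>Sd. d e2 * mpoly_monom e2 H)"
      by (simp add: sum_product)
    also have "\<dots> = f H * g H"
      using fc fd c d by (simp add: mpoly_eval_superset Sc_def Sd_def)
    finally show ?thesis .
  qed
  moreover have "is_mpoly h"
    unfolding is_mpoly_def by (rule finite_subset[OF supp fT])
  ultimately show ?thesis unfolding mpoly_function_def by blast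
qed

lemma mpoly_function_diff:
  assumes "mpoly_function f" "mpoly_function g"
  shows "mpoly_function (\<lambda>H. f H - g H)"
  using mpoly_function_add[OF assms(1) mpoly_function_mult[OF mpoly_function_const[of "-1"] assms(2)]]
  by simp

lemma mpoly_function_sum:
  assumes "finite A" "\<And>a. a \<in> A \<Longrightarrow> mpoly_function (f a)"
  shows "mpoly_function (\<lambda>H. \<Sum>a\<in>A. f a H)"
  using assms by (induction A rule: finite_induct) (auto intro: mpoly_function_const mpoly_function_add)

lemma mpoly_function_prod:
  assumes "finite A" "\<And>a. a \<in> A \<Longrightarrow> mpoly_function (f a)"
  shows "mpoly_function (\<lambda>H. \<Prod>a\<in>A. f a H)"
  using assms by (induction A rule: finite_induct) (auto intro: mpoly_function_const mpoly_function_mult)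

lemma mpoly_function_det: "mpoly_function det"
proof -
  have "mpoly_function (\<lambda>H::complex^'n::finite^'n.
      \<Sum>p\<in>{p. p permutes UNIV}. of_int (sign p) * (\<Prod>i\<in>UNIV. H$i$p i))"
    by (intro mpoly_function_sum mpoly_function_mult mpoly_function_const mpoly_function_prod
        mpoly_function_entry) (simp_all add: finite_permutations)
  then show ?thesis unfolding det_def .
qed

definition diag_mat :: "'a::zero^'n \<Rightarrow> 'a^'n^'n" where
  "diag_mat v = (\<chi> i j. if i = j then v$i else 0)"

lemma is_diag_mat_diag_mat: "is_diag_mat (diag_mat v)"
  unfolding is_diag_mat_def diag_mat_def by simp

lemma matrix_mul_diag_mat_component:
  fixes A :: "'a::semiring_1^'n::finite^'m"
  shows "(A ** diag_mat v)$i$j = A$i$j * v$j"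
  by (simp add: matrix_matrix_mult_def diag_mat_def if_distrib cong: if_cong)

lemma three_phase_matrix_single_feedback_entry:
  fixes H :: "'a::comm_semiring_1^'n::finite^'n"
  shows "(H ** diag_mat d2 + H ** diag_mat d3 ** transpose H ** diag_mat (axis r 1) ** H)$i$j
    = H$i$j * d2$j + (\<Sum>k\<in>UNIV. H$i$k * d3$k * H$r$k) * H$r$j"
proof -
  have "(H ** diag_mat d3 ** transpose H ** diag_mat (axis r 1) ** H)$i$j
      = (\<Sum>l\<in>UNIV. (H ** diag_mat d3 ** transpose H)$i$l * axis r 1 $ l * H$l$j)"
    by (simp add: matrix_matrix_mult_def[of _ H] matrix_mul_diag_mat_component)
  also have "\<dots> = (H ** diag_mat d3 ** transpose H)$i$r * H$r$j"
    by (simp add: axis_def if_distrib if_distribR cong: if_cong)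
  also have "(H ** diag_mat d3 ** transpose H)$i$r = (\<Sum>k\<in>UNIV. H$i$k * d3$k * H$r$k)"
    unfolding matrix_matrix_mult_def[of _ "transpose H"]
    by (simp add: matrix_mul_diag_mat_component transpose_def)
  finally show ?thesis
    by (simp add: matrix_mul_diag_mat_component)
qed

lemma weighted_row_system_solvable:
  fixes H :: "'a::field^'n::finite^'n"
  assumes "det H \<noteq> 0" "\<And>k. H$r$k \<noteq> 0"
  obtains d where "\<And>i. (\<Sum>k\<in>UNIV. H$i$k * d$k * H$r$k) = s$i"
proof -
  obtain y where y: "H *v y = s"
    using assms(1) invertible_det_nz matrix_right_invertible_surjective
    unfolding invertible_def by (metis surj_def)
  have "(\<Sum>k\<in>UNIV. H$i$k * (y$k / H$r$k) * H$r$k) = s$i" for i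
    using y assms(2) by (simp add: matrix_vector_mult_def vec_eq_iff)
  then show ?thesis by (intro that[of "\<chi> k. y$k / H$r$k"]) simp
qed

definition interference_aligned :: "'a::field^'n^'n \<Rightarrow> 'a^'n^'n \<Rightarrow> bool" where
  "interference_aligned H B \<longleftrightarrow>
     (\<forall>i. (\<forall>j j'. j \<noteq> i \<longrightarrow> j' \<noteq> i \<longrightarrow> B$i$j / H$i$j = B$i$j' / H$i$j') \<and>
          (\<forall>j. j \<noteq> i \<longrightarrow> B$i$i / H$i$i \<noteq> B$i$j / H$i$j))"

text \<open>With \<open>s = (0, Q, P)\<close>, row 1 only sees \<open>d = (P Q, 0, 0)\<close>; the values of \<open>P\<close> and \<open>Q\<close>
  are exactly what makes the two off-diagonal ratios agree in rows 2 and 3.\<close>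
lemma interference_aligned_3:
  fixes H B :: "complex^3^3"
  assumes entries: "\<And>i j. H$i$j \<noteq> 0"
    and m1: "H$1$3 * H$2$1 \<noteq> H$1$1 * H$2$3" and m2: "H$1$2 * H$3$1 \<noteq> H$1$1 * H$3$2"
    and m3: "H$1$2 * H$2$3 \<noteq> H$1$3 * H$2$2" and m4: "H$1$3 * H$3$2 \<noteq> H$1$2 * H$3$3"
    and P: "P = H$1$3 / H$2$3 - H$1$1 / H$2$1" and Q: "Q = H$1$2 / H$3$2 - H$1$1 / H$3$1"
    and B: "\<And>i j. B$i$j = H$i$j * vector [P * Q, 0, 0] $ j + vector [0, Q, P] $ i * H$1$j"
  shows "interference_aligned H B"
proof -
  have "P \<noteq> 0"
    using entries[of 2 1] entries[of 2 3] m1 unfolding P by (simp add: field_simps)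
  have "Q \<noteq> 0"
    using entries[of 3 1] entries[of 3 2] m2 unfolding Q by (simp add: field_simps)
  have ratio: "B$i$j / H$i$j = vector [P * Q, 0, 0] $ j + vector [0, Q, P] $ i * H$1$j / H$i$j"
    for i j using entries[of i j] unfolding B by (simp add: field_simps)
  have row2: "P * Q + Q * H$1$1 / H$2$1 = Q * H$1$3 / H$2$3"
    and row3: "P * Q + P * H$1$1 / H$3$1 = P * H$1$2 / H$3$2"
    using entries[of 2 1] entries[of 2 3] entries[of 3 1] entries[of 3 2]
    unfolding P Q by (simp_all add: field_simps)
  have ratios:
    "B$1$1 / H$1$1 = P * Q" "B$1$2 / H$1$2 = 0" "B$1$3 / H$1$3 = 0"
    "B$2$1 / H$2$1 = Q * H$1$3 / H$2$3" "B$2$2 / H$2$2 = Q * H$1$2 / H$2$2"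
    "B$2$3 / H$2$3 = Q * H$1$3 / H$2$3"
    "B$3$1 / H$3$1 = P * H$1$2 / H$3$2" "B$3$2 / H$3$2 = P * H$1$2 / H$3$2"
    "B$3$3 / H$3$3 = P * H$1$3 / H$3$3"
    unfolding ratio using row2 row3 by simp_all
  have "Q * H$1$2 / H$2$2 \<noteq> Q * H$1$3 / H$2$3"
    using \<open>Q \<noteq> 0\<close> entries[of 2 2] entries[of 2 3] m3 by (simp add: field_simps)
  moreover have "P * H$1$3 / H$3$3 \<noteq> P * H$1$2 / H$3$2"
    using \<open>P \<noteq> 0\<close> entries[of 3 2] entries[of 3 3] m4 by (simp add: field_simps)
  ultimately show ?thesis
    unfolding interference_aligned_def forall_3 ratios using \<open>P \<noteq> 0\<close> \<open>Q \<noteq> 0\<close> by simp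
qed

definition alignment_discriminant :: "complex^3^3 \<Rightarrow> complex" where
  "alignment_discriminant H = (\<Prod>i\<in>UNIV. \<Prod>j\<in>UNIV. H$i$j) * det H *
    (H$1$3 * H$2$1 - H$1$1 * H$2$3) * (H$1$2 * H$3$1 - H$1$1 * H$3$2) *
    (H$1$2 * H$2$3 - H$1$3 * H$2$2) * (H$1$3 * H$3$2 - H$1$2 * H$3$3)"

lemma mpoly_function_alignment_discriminant: "mpoly_function alignment_discriminant"
  unfolding alignment_discriminant_def
  by (intro mpoly_function_mult mpoly_function_diff mpoly_function_prod mpoly_function_det
      mpoly_function_entry finite)

lemma alignment_discriminant_nonzero_iff:
  "alignment_discriminant H \<noteq> 0 \<longleftrightarrow> (\<forall>i j. H$i$j \<noteq> 0) \<and> det H \<noteq> 0 \<and>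
     H$1$3 * H$2$1 \<noteq> H$1$1 * H$2$3 \<and> H$1$2 * H$3$1 \<noteq> H$1$1 * H$3$2 \<and>
     H$1$2 * H$2$3 \<noteq> H$1$3 * H$2$2 \<and> H$1$3 * H$3$2 \<noteq> H$1$2 * H$3$3"
  by (simp add: alignment_discriminant_def)

lemma alignment_discriminant_nonzero_example:
  "alignment_discriminant (vector [vector [1, 2, 3], vector [4, 5, 7], vector [11, 13, 17]]) \<noteq> 0"
  by (simp add: alignment_discriminant_nonzero_iff forall_3 det_3)

lemma interference_alignment_exists_3:
  fixes H :: "complex^3^3"
  assumes "alignment_discriminant H \<noteq> 0"
  obtains d2 d3 where "interference_aligned H
    (H ** diag_mat d2 + H ** diag_mat d3 ** transpose H ** diag_mat (axis 1 1) ** H)"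
proof -
  define P where "P = H$1$3 / H$2$3 - H$1$1 / H$2$1"
  define Q where "Q = H$1$2 / H$3$2 - H$1$1 / H$3$1"
  have entries: "\<And>i j. H$i$j \<noteq> 0" and "det H \<noteq> 0"
    and minors: "H$1$3 * H$2$1 \<noteq> H$1$1 * H$2$3" "H$1$2 * H$3$1 \<noteq> H$1$1 * H$3$2"
      "H$1$2 * H$2$3 \<noteq> H$1$3 * H$2$2" "H$1$3 * H$3$2 \<noteq> H$1$2 * H$3$3"
    using assms unfolding alignment_discriminant_nonzero_iff by blast+
  obtain d3 where d3: "\<And>i. (\<Sum>k\<in>UNIV. H$i$k * d3$k * H$1$k) = vector [0, Q, P] $ i"
    using weighted_row_system_solvable[OF \<open>det H \<noteq> 0\<close> entries[of 1]] by blast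
  have "interference_aligned H
    (H ** diag_mat (vector [P * Q, 0, 0]) + H ** diag_mat d3 ** transpose H ** diag_mat (axis 1 1) ** H)"
    by (rule interference_aligned_3[OF entries minors P_def Q_def])
      (simp only: three_phase_matrix_single_feedback_entry d3)
  then show ?thesis by (rule that)
qed

theorem theorem3:
  "\<exists>c :: (3 \<times> 3 \<Rightarrow> nat) \<Rightarrow> complex. is_mpoly c \<and> mpoly_nonzero c \<and>
     (\<forall>H :: complex^3^3. mpoly_eval c H \<noteq> 0 \<longrightarrow>
        (\<exists>D1 D2 D3 :: complex^3^3. is_diag_mat D1 \<and> is_diag_mat D2 \<and> is_diag_mat D3 \<and>
           (let B = H ** D2 + H ** D3 ** transpose H ** D1 ** H in
            \<forall>i. (\<forall>j j'. j \<noteq> i \<longrightarrow> j' \<noteq> i \<longrightarrow> B$i$j / H$i$j = B$i$j' / H$i$j') \<and>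
                (\<forall>j. j \<noteq> i \<longrightarrow> B$i$i / H$i$i \<noteq> B$i$j / H$i$j))))"
proof -
  obtain c where c: "is_mpoly c" "\<And>H. mpoly_eval c H = alignment_discriminant H"
    using mpoly_function_alignment_discriminant unfolding mpoly_function_def by blast
  have "mpoly_nonzero c"
    using alignment_discriminant_nonzero_example
    by (intro mpoly_nonzero_if_eval_nonzero) (simp add: c(2))
  moreover have "\<exists>D1 D2 D3 :: complex^3^3. is_diag_mat D1 \<and> is_diag_mat D2 \<and> is_diag_mat D3 \<and>
      interference_aligned H (H ** D2 + H ** D3 ** transpose H ** D1 ** H)"
    if "alignment_discriminant H \<noteq> 0" for H
    using interference_alignment_exists_3[OF that] is_diag_mat_diag_mat by metis
  ultimately show ?thesis
    using c unfolding interference_aligned_def Let_def by auto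
qed

end
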